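(* Let $h\ge0$, let $z\in\mathcal{Q}\cap L^\infty$ and $q\in L^\infty$. Then $$\big(\mathcal{F}_h'(z)[q]\big)^2\le|\Omega|\,\nu\,\mathcal{F}_h''(z)[q^2].$$
   Context: $\Omega\subset\mathbb{R}^d$ bounded open domain, $|\Omega|$ its measure. $Q=\{(q,s)\in\mathbb{R}^d\times\mathbb{R}:s\ge\Lambda(q)\}$ with $\Lambda$ convex continuous, and $\mathcal{Q}$ the set of functions with values in $Q$ (at which $F$ is finite). $F$ is a $\nu$-self-concordant barrier for $Q$: $|F'''(z)[u^3]|\le2(F''(z)[u^2])^{3/2}$ and $|F'(z)[u]|\le\sqrt\nu(F''(z)[u^2])^{1/2}$. For $h>0$, $\int_\Omega^{(h)}\eta=\sum_{K\in T_h}\sum_k\omega_{K,k}\eta|_K(x_{K,k})$ is a quadrature rule on a triangulation $T_h$ of $\Omega$ with positive weights, integrating constants exactly; $\int^{(0)}$ is the exact integral. $\mathcal{F}_h(w)=\int_\Omega^{(h)}F(w(x))$, with derivatives $\mathcal{F}_h'(z)[q]=\int_\Omega^{(h)}F'(z)[q]$, $\mathcal{F}_h''(z)[q^2]=\int_\Omega^{(h)}F''(z)[q^2]$. *)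

theory Defs
  imports "HOL-Analysis.Analysis"
begin

type_synonym 'd state = "(real^('d::finite)) \<times> real"

definition epiQ :: "(real^('d::finite) \<Rightarrow> real) \<Rightarrow> ('d::finite) state set" where
  "epiQ Lam = {(q, s). s \<ge> Lam q}"

definition dd :: "(('d::finite) state \<Rightarrow> real) \<Rightarrow> ('d::finite) state \<Rightarrow> ('d::finite) state \<Rightarrow> nat \<Rightarrow> real" where
  "dd F z u k = (deriv ^^ k) (\<lambda>t. F (z + t *\<^sub>R u)) 0"

definition sc_barrier :: "('d::finite) state set \<Rightarrow> (('d::finite) state \<Rightarrow> real) \<Rightarrow> real \<Rightarrow> bool" where
  "sc_barrier Q F \<nu> \<longleftrightarrow>
     (\<forall>z\<in>interior Q. \<forall>u. \<forall>k<3. \<forall>\<^sub>F t in nhds 0.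
         (deriv ^^ k) (\<lambda>t. F (z + t *\<^sub>R u)) differentiable (at t)) \<and>
     convex_on (interior Q) F \<and>
     (\<forall>x\<in>frontier Q. filterlim F at_top (at x within interior Q)) \<and>
     (\<forall>z\<in>interior Q. \<forall>u. \<bar>dd F z u 3\<bar> \<le> 2 * (dd F z u 2) powr (3/2)) \<and>
     (\<forall>z\<in>interior Q. \<forall>u. \<bar>dd F z u 1\<bar> \<le> sqrt \<nu> * sqrt (dd F z u 2))"

definition is_simplex :: "(real^('d::finite)) set \<Rightarrow> bool" where
  "is_simplex K \<longleftrightarrow> (\<exists>S. finite S \<and> card S = CARD('d) + 1 \<and> \<not> affine_dependent S \<and> K = convex hull S)"

definition triangulation :: "(real^('d::finite)) set \<Rightarrow> (real^('d::finite)) set set \<Rightarrow> bool" where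
  "triangulation \<Omega> T \<longleftrightarrow> finite T \<and> (\<forall>K\<in>T. is_simplex K) \<and> \<Union>T = closure \<Omega> \<and>
     (\<forall>K1\<in>T. \<forall>K2\<in>T. K1 \<noteq> K2 \<longrightarrow> interior K1 \<inter> interior K2 = {})"

definition quad_rule :: "(real^('d::finite)) set \<Rightarrow> (real^('d::finite)) set set \<Rightarrow> ((real^('d::finite)) set \<Rightarrow> nat set)
     \<Rightarrow> ((real^('d::finite)) set \<Rightarrow> nat \<Rightarrow> real^'d) \<Rightarrow> ((real^('d::finite)) set \<Rightarrow> nat \<Rightarrow> real) \<Rightarrow> bool" where
  "quad_rule \<Omega> T I xq w \<longleftrightarrow> triangulation \<Omega> T \<and>
     (\<forall>K\<in>T. finite (I K) \<and> (\<forall>k\<in>I K. xq K k \<in> K \<and> w K k > 0)) \<and>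
     (\<Sum>K\<in>T. \<Sum>k\<in>I K. w K k) = measure lebesgue \<Omega>"

definition qint :: "(real^('d::finite)) set \<Rightarrow> (real \<Rightarrow> (real^('d::finite)) set set) \<Rightarrow> (real \<Rightarrow> (real^('d::finite)) set \<Rightarrow> nat set)
     \<Rightarrow> (real \<Rightarrow> (real^('d::finite)) set \<Rightarrow> nat \<Rightarrow> real^'d) \<Rightarrow> (real \<Rightarrow> (real^('d::finite)) set \<Rightarrow> nat \<Rightarrow> real)
     \<Rightarrow> real \<Rightarrow> (real^('d::finite) \<Rightarrow> real) \<Rightarrow> real" where
  "qint \<Omega> T I xq w h \<eta> = (if h = 0 then (LINT x : \<Omega> | lebesgue. \<eta> x)
     else (\<Sum>K\<in>T h. \<Sum>k\<in>I h K. w h K k * \<eta> (xq h K k)))"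

text \<open>Same, for nonnegative integrands, with values in [0,\<infinity>] (so that a divergent
  exact integral is +\<infinity> rather than a junk value).\<close>
definition qint_nn :: "(real^('d::finite)) set \<Rightarrow> (real \<Rightarrow> (real^('d::finite)) set set) \<Rightarrow> (real \<Rightarrow> (real^('d::finite)) set \<Rightarrow> nat set)
     \<Rightarrow> (real \<Rightarrow> (real^('d::finite)) set \<Rightarrow> nat \<Rightarrow> real^'d) \<Rightarrow> (real \<Rightarrow> (real^('d::finite)) set \<Rightarrow> nat \<Rightarrow> real)
     \<Rightarrow> real \<Rightarrow> (real^('d::finite) \<Rightarrow> real) \<Rightarrow> ennreal" where
  "qint_nn \<Omega> T I xq w h \<eta> = (if h = 0 then (\<integral>\<^sup>+ x \<in> \<Omega>. ennreal (\<eta> x) \<partial>lebesgue)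
     else ennreal (\<Sum>K\<in>T h. \<Sum>k\<in>I h K. w h K k * \<eta> (xq h K k)))"

end

theory Submission
  imports Defs
begin

(* Restricted to a line, a convex function has nonnegative second derivative, and squaring the
   barrier inequality |F'(z)[u]| <= sqrt nu (F''(z)[u^2])^(1/2) gives (F'(z)[u])^2 <= nu F''(z)[u^2]
   pointwise. The Cauchy-Schwarz inequality (int a)^2 <= |Omega| int a^2 holds both for the exact
   integral over Omega and for a quadrature rule with positive weights summing to |Omega|, so the
   pointwise bound integrates to the claim. Since the right-hand side lives in [0, infinity], no
   integrability of F''(z)[q^2] is needed. *)

lemma deriv2_nonneg_if_locally_midpoint_convex:
  fixes g :: "real \<Rightarrow> real"
  assumes diff: "\<forall>\<^sub>F t in nhds x. g differentiable (at t)"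
    and diff': "deriv g differentiable (at x)"
    and midpoint: "\<forall>\<^sub>F s in nhds 0. 2 * g x \<le> g (x + s) + g (x - s)"
  shows "0 \<le> deriv (deriv g) x"
proof (rule ccontr)
  assume "\<not> 0 \<le> deriv (deriv g) x"
  then have neg: "deriv (deriv g) x < 0" by simp
  have D2: "DERIV (deriv g) x :> deriv (deriv g) x"
    using diff' by (simp add: DERIV_deriv_iff_real_differentiable)
  obtain d1 where "d1 > 0" and d1: "\<And>s. 0 < s \<Longrightarrow> s < d1 \<Longrightarrow> deriv g (x + s) < deriv g x"
    using DERIV_neg_dec_right[OF D2 neg] by blast
  obtain d2 where "d2 > 0" and d2: "\<And>s. 0 < s \<Longrightarrow> s < d2 \<Longrightarrow> deriv g x < deriv g (x - s)"
    using DERIV_neg_dec_left[OF D2 neg] by blast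
  obtain d3 where "d3 > 0" and d3: "\<And>t. dist t x < d3 \<Longrightarrow> g differentiable (at t)"
    using diff unfolding eventually_nhds_metric by blast
  obtain d4 where "d4 > 0" and d4: "\<And>s. dist s 0 < d4 \<Longrightarrow> 2 * g x \<le> g (x + s) + g (x - s)"
    using midpoint unfolding eventually_nhds_metric by blast
  define s where "s = Min {d1, d2, d3, d4} / 2"
  have s: "0 < s" "s < d1" "s < d2" "s < d3" "s < d4"
    using \<open>d1 > 0\<close> \<open>d2 > 0\<close> \<open>d3 > 0\<close> \<open>d4 > 0\<close> by (auto simp: s_def)
  have Dg: "DERIV g t :> deriv g t" if "x - s \<le> t" "t \<le> x + s" for t
    using d3[of t] that s by (simp add: dist_real_def DERIV_deriv_iff_real_differentiable)
  obtain t1 where t1: "x < t1" "t1 < x + s" "g (x + s) - g x = s * deriv g t1"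
    using MVT2[of x "x + s" g "deriv g"] Dg s by auto
  obtain t2 where t2: "x - s < t2" "t2 < x" "g x - g (x - s) = s * deriv g t2"
    using MVT2[of "x - s" x g "deriv g"] Dg s by auto
  have "deriv g t1 < deriv g t2"
    using d1[of "t1 - x"] d2[of "x - t2"] t1 t2 s by auto
  then have "g (x + s) - g x < g x - g (x - s)"
    using t1(3) t2(3) s(1) by simp
  with d4[of s] s show False by simp
qed

lemma sc_barrier_dd2_nonneg:
  assumes sc: "sc_barrier Q F \<nu>" and z: "z \<in> interior Q"
  shows "0 \<le> dd F z u 2"
proof -
  define g where "g = (\<lambda>t. F (z + t *\<^sub>R u))"
  have cvx: "convex_on (interior Q) F"
    using sc unfolding sc_barrier_def by blast
  have smooth: "\<forall>\<^sub>F t in nhds 0. (deriv ^^ k) g differentiable (at t)" if "k < 3" for k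
    using sc z that unfolding sc_barrier_def g_def by blast
  have "((\<lambda>s. z + s *\<^sub>R u) \<longlongrightarrow> z) (nhds 0)" and "((\<lambda>s. z - s *\<^sub>R u) \<longlongrightarrow> z) (nhds 0)"
    by (auto intro!: tendsto_eq_intros filterlim_ident)
  then have "\<forall>\<^sub>F s in nhds 0. z + s *\<^sub>R u \<in> interior Q \<and> z - s *\<^sub>R u \<in> interior Q"
    using z by (auto intro!: eventually_conj topological_tendstoD)
  moreover have "2 * g 0 \<le> g (0 + s) + g (0 - s)"
    if "z + s *\<^sub>R u \<in> interior Q" "z - s *\<^sub>R u \<in> interior Q" for s
  proof -
    have "z = (1 - 1/2) *\<^sub>R (z + s *\<^sub>R u) + (1/2::real) *\<^sub>R (z - s *\<^sub>R u)"
      by (simp add: algebra_simps flip: scaleR_2)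
    also have "F \<dots> \<le> (1 - 1/2) * F (z + s *\<^sub>R u) + 1/2 * F (z - s *\<^sub>R u)"
      by (rule convex_onD[OF cvx]) (use that in auto)
    finally have "F z \<le> (1 - 1/2) * F (z + s *\<^sub>R u) + 1/2 * F (z - s *\<^sub>R u)" .
    then show ?thesis by (simp add: g_def)
  qed
  ultimately have "0 \<le> deriv (deriv g) 0"
    using smooth[of 0] smooth[of 1]
    by (intro deriv2_nonneg_if_locally_midpoint_convex) (auto elim: eventually_mono dest: eventually_nhds_x_imp_x)
  then show ?thesis by (simp add: dd_def g_def numeral_2_eq_2)
qed

lemma sc_barrier_dd1_sq_le:
  assumes sc: "sc_barrier Q F \<nu>" and z: "z \<in> interior Q"
  shows "(dd F z u 1)\<^sup>2 \<le> \<nu> * dd F z u 2"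
proof -
  have "\<bar>dd F z u 1\<bar> \<le> sqrt \<nu> * sqrt (dd F z u 2)"
    using sc z unfolding sc_barrier_def by blast
  then have "\<bar>dd F z u 1\<bar> \<le> sqrt (\<nu> * dd F z u 2)"
    by (simp add: real_sqrt_mult)
  moreover from this have "0 \<le> \<nu> * dd F z u 2"
    using abs_ge_zero order_trans real_sqrt_ge_0_iff by blast
  ultimately show ?thesis
    by (metis abs_le_square_iff real_sqrt_abs real_sqrt_le_iff real_sqrt_pow2)
qed

lemma weighted_sum_sq_le:
  fixes W A :: "'a \<Rightarrow> real"
  assumes "\<And>i. i \<in> S \<Longrightarrow> 0 \<le> W i"
  shows "(\<Sum>i\<in>S. W i * A i)\<^sup>2 \<le> (\<Sum>i\<in>S. W i) * (\<Sum>i\<in>S. W i * (A i)\<^sup>2)"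
proof -
  have "(\<Sum>i\<in>S. sqrt (W i) * (sqrt (W i) * A i))\<^sup>2
     \<le> (\<Sum>i\<in>S. (sqrt (W i))\<^sup>2) * (\<Sum>i\<in>S. (sqrt (W i) * A i)\<^sup>2)"
    by (rule Cauchy_Schwarz_ineq_sum)
  also have "(\<Sum>i\<in>S. sqrt (W i) * (sqrt (W i) * A i)) = (\<Sum>i\<in>S. W i * A i)"
    using assms by (intro sum.cong) (auto simp flip: mult.assoc)
  also have "(\<Sum>i\<in>S. (sqrt (W i))\<^sup>2) = (\<Sum>i\<in>S. W i)"
    using assms by (intro sum.cong) auto
  also have "(\<Sum>i\<in>S. (sqrt (W i) * A i)\<^sup>2) = (\<Sum>i\<in>S. W i * (A i)\<^sup>2)"
    using assms by (intro sum.cong) (auto simp: power_mult_distrib)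
  finally show ?thesis .
qed

lemma quad_rule_sum_sq_le:
  assumes quad: "quad_rule \<Omega> T I xq w"
    and le: "\<And>K k. K \<in> T \<Longrightarrow> k \<in> I K \<Longrightarrow> (a (xq K k))\<^sup>2 \<le> c * b (xq K k)"
    and nonneg: "\<And>K k. K \<in> T \<Longrightarrow> k \<in> I K \<Longrightarrow> 0 \<le> b (xq K k)"
  shows "ennreal ((\<Sum>K\<in>T. \<Sum>k\<in>I K. w K k * a (xq K k))\<^sup>2)
    \<le> ennreal (measure lebesgue \<Omega> * c) * ennreal (\<Sum>K\<in>T. \<Sum>k\<in>I K. w K k * b (xq K k))"
proof -
  define S where "S = Sigma T I"
  define W where "W p = w (fst p) (snd p)" for p
  define node where "node p = xq (fst p) (snd p)" for p
  have "finite T" and "\<And>K. K \<in> T \<Longrightarrow> finite (I K)"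
    and W_pos: "\<And>p. p \<in> S \<Longrightarrow> 0 < W p"
    and W_sum: "(\<Sum>K\<in>T. \<Sum>k\<in>I K. w K k) = measure lebesgue \<Omega>"
    using quad unfolding quad_rule_def triangulation_def S_def W_def by auto
  then have Sigma_sum: "(\<Sum>K\<in>T. \<Sum>k\<in>I K. f K k) = (\<Sum>p\<in>S. f (fst p) (snd p))" for f :: "_ \<Rightarrow> _ \<Rightarrow> real"
    unfolding S_def by (simp add: sum.Sigma split_beta)
  have le': "W p * (a (node p))\<^sup>2 \<le> W p * (c * b (node p))" and nonneg': "0 \<le> W p * b (node p)"
    if "p \<in> S" for p
    using that le nonneg W_pos[OF that] by (auto simp: S_def node_def)
  have "(\<Sum>p\<in>S. W p * a (node p))\<^sup>2 \<le> (\<Sum>p\<in>S. W p) * (\<Sum>p\<in>S. W p * (a (node p))\<^sup>2)"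
    using W_pos by (intro weighted_sum_sq_le less_imp_le)
  also have "\<dots> \<le> (\<Sum>p\<in>S. W p) * (\<Sum>p\<in>S. W p * (c * b (node p)))"
    using W_pos le' by (intro mult_left_mono sum_mono sum_nonneg) (auto intro: less_imp_le)
  also have "\<dots> = measure lebesgue \<Omega> * c * (\<Sum>p\<in>S. W p * b (node p))"
    using W_sum by (simp add: Sigma_sum W_def sum_distrib_left mult_ac)
  finally show ?thesis
    using nonneg' by (simp add: Sigma_sum W_def node_def ennreal_leI sum_nonneg flip: ennreal_mult'')
qed

lemma set_integral_sq_le:
  fixes a :: "'a \<Rightarrow> real"
  assumes \<Omega>[measurable]: "\<Omega> \<in> sets M" and int: "set_integrable M \<Omega> a"
  shows "ennreal ((LINT x:\<Omega>|M. a x)\<^sup>2) \<le> emeasure M \<Omega> * (\<integral>\<^sup>+x\<in>\<Omega>. ennreal ((a x)\<^sup>2) \<partial>M)"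
proof -
  define f where "f = (\<lambda>x. indicator \<Omega> x * a x)"
  have f_int: "integrable M f"
    using int by (simp add: set_integrable_def f_def)
  then have [measurable]: "f \<in> borel_measurable M" by (rule borel_measurable_integrable)
  have "ennreal ((LINT x:\<Omega>|M. a x)\<^sup>2) = (ennreal \<bar>integral\<^sup>L M f\<bar>)\<^sup>2"
    by (simp add: set_lebesgue_integral_def f_def ennreal_power)
  also have "\<dots> \<le> (\<integral>\<^sup>+x. ennreal \<bar>f x\<bar> \<partial>M)\<^sup>2"
    using integral_norm_bound_ennreal[OF f_int] by (intro power_mono) auto
  also have "(\<integral>\<^sup>+x. ennreal \<bar>f x\<bar> \<partial>M) = (\<integral>\<^sup>+x. ennreal \<bar>f x\<bar> * indicator \<Omega> x \<partial>M)"
    by (intro nn_integral_cong) (auto simp: f_def indicator_def)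
  also have "(\<dots>)\<^sup>2 \<le> (\<integral>\<^sup>+x. (ennreal \<bar>f x\<bar>)\<^sup>2 \<partial>M) * (\<integral>\<^sup>+x. (indicator \<Omega> x)\<^sup>2 \<partial>M)"
    by (rule Cauchy_Schwarz_nn_integral) auto
  also have "(\<integral>\<^sup>+x. (ennreal \<bar>f x\<bar>)\<^sup>2 \<partial>M) = (\<integral>\<^sup>+x\<in>\<Omega>. ennreal ((a x)\<^sup>2) \<partial>M)"
    by (intro nn_integral_cong) (auto simp: f_def indicator_def ennreal_power)
  also have "(\<integral>\<^sup>+x. (indicator \<Omega> x)\<^sup>2 \<partial>M) = (\<integral>\<^sup>+x. indicator \<Omega> x \<partial>M)"
    by (intro nn_integral_cong) (simp add: indicator_def)
  also have "\<dots> = emeasure M \<Omega>"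
    by simp
  finally show ?thesis by (simp add: mult.commute)
qed

lemma set_integral_sq_le_mult:
  fixes a b :: "'a \<Rightarrow> real"
  assumes \<Omega>: "\<Omega> \<in> fmeasurable M"
    and le: "\<And>x. x \<in> \<Omega> \<Longrightarrow> (a x)\<^sup>2 \<le> c * b x"
    and nonneg: "\<And>x. x \<in> \<Omega> \<Longrightarrow> 0 \<le> b x"
  shows "ennreal ((LINT x:\<Omega>|M. a x)\<^sup>2)
    \<le> ennreal (measure M \<Omega> * c) * (\<integral>\<^sup>+x\<in>\<Omega>. ennreal (b x) \<partial>M)"
proof (cases "0 < c \<and> set_integrable M \<Omega> a")
  \<comment> \<open>For c \<le> 0 ennreal truncates the right-hand side to 0; nonneg then forces a = 0 on \<Omega>.\<close>
  case False
  have "(LINT x:\<Omega>|M. a x) = 0"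
  proof (cases "set_integrable M \<Omega> a")
    case True
    with False have "c \<le> 0" by simp
    have "(a x)\<^sup>2 \<le> 0" if "x \<in> \<Omega>" for x
      using le[OF that] nonneg[OF that] \<open>c \<le> 0\<close> by (meson mult_nonpos_nonneg order_trans)
    then have "(\<lambda>x. indicator \<Omega> x *\<^sub>R a x) = (\<lambda>x. 0)"
      by (auto simp: indicator_def fun_eq_iff)
    then show ?thesis
      by (simp add: set_lebesgue_integral_def)
  qed (simp add: set_lebesgue_integral_def set_integrable_def not_integrable_integral_eq)
  then show ?thesis by simp
next
  case True
  then have "0 < c" and int: "set_integrable M \<Omega> a" by auto
  have \<Omega>_sets[measurable]: "\<Omega> \<in> sets M" using \<Omega> by (rule fmeasurableD)
  have [measurable]: "(\<lambda>x. indicator \<Omega> x * a x) \<in> borel_measurable M"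
    using int by (simp add: set_integrable_def borel_measurable_integrable)
  have "ennreal ((LINT x:\<Omega>|M. a x)\<^sup>2) \<le> emeasure M \<Omega> * (\<integral>\<^sup>+x\<in>\<Omega>. ennreal ((a x)\<^sup>2) \<partial>M)"
    using \<Omega>_sets int by (rule set_integral_sq_le)
  also have "(\<integral>\<^sup>+x\<in>\<Omega>. ennreal ((a x)\<^sup>2) \<partial>M)
      = (\<integral>\<^sup>+x. ennreal c * ennreal ((indicator \<Omega> x * a x)\<^sup>2 / c) \<partial>M)"
    using \<open>0 < c\<close> by (intro nn_integral_cong) (auto simp: indicator_def simp flip: ennreal_mult)
  also have "\<dots> = ennreal c * (\<integral>\<^sup>+x. ennreal ((indicator \<Omega> x * a x)\<^sup>2 / c) \<partial>M)"
    by (rule nn_integral_cmult) measurable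
  also have "emeasure M \<Omega> * \<dots> \<le> emeasure M \<Omega> * (ennreal c * (\<integral>\<^sup>+x\<in>\<Omega>. ennreal (b x) \<partial>M))"
    using le \<open>0 < c\<close>
    by (intro mult_left_mono nn_integral_mono)
      (auto simp: indicator_def divide_le_eq mult.commute intro: ennreal_leI)
  finally show ?thesis
    using \<Omega> \<open>0 < c\<close> by (simp add: emeasure_eq_measure2 ennreal_mult mult_ac)
qed

theorem mainTheorem4:
  fixes \<Omega> :: "(real^'d) set" and Lam :: "real^'d \<Rightarrow> real"
    and F :: "'d state \<Rightarrow> real" and \<nu> :: real
    and T :: "real \<Rightarrow> (real^'d) set set" and I :: "real \<Rightarrow> (real^'d) set \<Rightarrow> nat set"
    and xq :: "real \<Rightarrow> (real^'d) set \<Rightarrow> nat \<Rightarrow> real^'d"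
    and w :: "real \<Rightarrow> (real^'d) set \<Rightarrow> nat \<Rightarrow> real"
    and h :: real and z q :: "real^'d \<Rightarrow> 'd state"
  assumes "open \<Omega>" and "bounded \<Omega>"
    and "convex_on UNIV Lam" and "continuous_on UNIV Lam"
    and "sc_barrier (epiQ Lam) F \<nu>"
    and "\<And>h'. h' > 0 \<Longrightarrow> quad_rule \<Omega> (T h') (I h') (xq h') (w h')"
    and "h \<ge> 0"
    and "\<forall>x\<in>\<Omega>. z x \<in> interior (epiQ Lam)"
    and "h > 0 \<Longrightarrow> \<forall>K\<in>T h. \<forall>k\<in>I h K. z (xq h K k) \<in> interior (epiQ Lam)"
    and "z \<in> borel_measurable lebesgue" and "\<exists>C. AE x in lebesgue. x \<in> \<Omega> \<longrightarrow> norm (z x) \<le> C"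
    and "q \<in> borel_measurable lebesgue" and "\<exists>C. AE x in lebesgue. x \<in> \<Omega> \<longrightarrow> norm (q x) \<le> C"
  shows "ennreal ((qint \<Omega> T I xq w h (\<lambda>x. dd F (z x) (q x) 1))\<^sup>2)
           \<le> ennreal (measure lebesgue \<Omega> * \<nu>) * qint_nn \<Omega> T I xq w h (\<lambda>x. dd F (z x) (q x) 2)"
proof -
  have pointwise: "(dd F y u 1)\<^sup>2 \<le> \<nu> * dd F y u 2" "0 \<le> dd F y u 2"
    if "y \<in> interior (epiQ Lam)" for y u
    using sc_barrier_dd1_sq_le sc_barrier_dd2_nonneg assms(5) that by blast+
  show ?thesis
  proof (cases "h = 0")
    case True
    have "\<Omega> \<in> lmeasurable"
      using assms(1,2) by (simp add: lmeasurable_open)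
    then show ?thesis
      using assms(8) pointwise unfolding qint_def qint_nn_def if_P[OF True]
      by (intro set_integral_sq_le_mult) auto
  next
    case False
    with assms(7) have "h > 0" by simp
    then show ?thesis
      using assms(6,9) pointwise unfolding qint_def qint_nn_def if_not_P[OF False]
      by (intro quad_rule_sum_sq_le) auto
  qed
qed

end
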